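(* Let $p\in[1,+\infty]$, let $\tilde\Lambda\colon\mathbb{R}^n\to\mathbb{R}$ be an aggregation function and define $\Lambda\colon L^p(\mathbb{R}^n)\to L^p(\mathbb{R})$ by $\Lambda(X)(\omega)=\tilde\Lambda(X(\omega))$. (i) If $\tilde\Lambda$ is concave and bounded from above, then $\Lambda$ is concave and lower demicontinuous. (ii) If $\tilde\Lambda$ is linear, then $\Lambda$ is linear and lower demicontinuous. (iii) If $\tilde\Lambda$ is regularly increasing, then $\Lambda$ is regularly increasing.
   Context: $(\Omega,\mathcal{F},\mathbb{P})$ probability space; $\frac1p+\frac1q=1$; $L^p(A)$: $A$-valued random vectors with finite $p$-norm (a.s. classes). $L^p(\mathbb{R}^n)$, $L^p(\mathbb{R})$ carry the norm topology if $p<\infty$ and the weak$^\ast$ topology $\sigma(L^\infty,L^1)$ if $p=\infty$; their duals are $L^q(\mathbb{R}^n)$, $L^q(\mathbb{R})$ via $\mathbb{E}[(X^\ast)^{\mathsf T}X]$. Cones $C=L^p(\mathbb{R}^n_+)$, $D=L^p(\mathbb{R}_+)$, with $C^{\#}=\{X\in C:\mathbb{E}[(X^\ast)^{\mathsf T}X]>0\ \forall X^\ast\in L^q(\mathbb{R}^n_+)\setminus\{0\}\}$ and $D^{\#}$ analogously. An aggregation function is an increasing $\tilde\Lambda\colon\mathbb{R}^n\to\mathbb{R}$ ($x\le y$ componentwise implies $\tilde\Lambda(x)\le\tilde\Lambda(y)$) such that $\tilde\Lambda\circ X\in L^p(\mathbb{R})$ for all $X\in L^p(\mathbb{R}^n)$.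 $\tilde\Lambda$ is regularly increasing if it is increasing and $x_i<y_i$ for all $i$ implies $\tilde\Lambda(x)<\tilde\Lambda(y)$. $\Lambda$ is concave if $\Lambda(\lambda X_1+(1-\lambda)X_2)\ge\lambda\Lambda(X_1)+(1-\lambda)\Lambda(X_2)$ a.s. for $\lambda\in(0,1)$. $\Lambda$ is lower demicontinuous if for every open halfspace $M=\{Y\in L^p(\mathbb{R}):\mathbb{E}[Y^\ast Y]>c\}$ ($Y^\ast\in L^q(\mathbb{R})\setminus\{0\}$, $c\in\mathbb{R}$) the set $\{X\in L^p(\mathbb{R}^n):(\Lambda(X)+L^p(\mathbb{R}_+))\cap M\ne\emptyset\}$ is open. $\Lambda$ is regularly increasing if $X_2-X_1\in C$ implies $\Lambda(X_2)-\Lambda(X_1)\in D$, and $X_2-X_1\in C^{\#}$ implies $\Lambda(X_2)-\Lambda(X_1)\in D^{\#}$. *)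

theory Defs
  imports "HOL-Probability.Probability"
begin

text \<open>Random vectors are measurable functions on the probability space M;
  a.s.-classes are handled by stating all identities/inequalities almost surely.\<close>

definition memLp :: "'a measure \<Rightarrow> ennreal \<Rightarrow> ('a \<Rightarrow> 'b::euclidean_space) \<Rightarrow> bool" where
  "memLp M p X \<longleftrightarrow> X \<in> borel_measurable M \<and>
     (if p = \<infinity> then (\<exists>C. AE \<omega> in M. norm (X \<omega>) \<le> C)
      else integrable M (\<lambda>\<omega>. norm (X \<omega>) powr enn2real p))"

text \<open>L^p norm for finite p.\<close>
definition Lpnorm :: "'a measure \<Rightarrow> ennreal \<Rightarrow> ('a \<Rightarrow> 'b::euclidean_space) \<Rightarrow> real" where
  "Lpnorm M p X = (\<integral>\<omega>. norm (X \<omega>) powr enn2real p \<partial>M) powr (1 / enn2real p)"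

definition conj_exp :: "ennreal \<Rightarrow> ennreal" where
  "conj_exp p = (if p = 1 then \<infinity> else if p = \<infinity> then 1
                 else ennreal (enn2real p / (enn2real p - 1)))"

definition pairing :: "'a measure \<Rightarrow> ('a \<Rightarrow> 'b::euclidean_space) \<Rightarrow> ('a \<Rightarrow> 'b) \<Rightarrow> real" where
  "pairing M Z X = (\<integral>\<omega>. Z \<omega> \<bullet> X \<omega> \<partial>M)"

text \<open>Open sets of L^p: norm topology for finite p, weak* topology sigma(L^infty, L^1)
  for p = infinity (via the basic neighbourhoods determined by finitely many L^1 elements).\<close>
definition Lp_open :: "'a measure \<Rightarrow> ennreal \<Rightarrow> ('a \<Rightarrow> 'b::euclidean_space) set \<Rightarrow> bool" where
  "Lp_open M p S \<longleftrightarrow> S \<subseteq> {X. memLp M p X} \<and>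
     (\<forall>X\<in>S. if p = \<infinity> then
        (\<exists>Zs :: ('a \<Rightarrow> 'b) list. \<exists>\<epsilon>>0. (\<forall>Z\<in>set Zs. memLp M 1 Z) \<and>
           {Y. memLp M \<infinity> Y \<and> (\<forall>Z\<in>set Zs. \<bar>pairing M Z (\<lambda>\<omega>. Y \<omega> - X \<omega>)\<bar> < \<epsilon>)} \<subseteq> S)
      else (\<exists>\<epsilon>>0. {Y. memLp M p Y \<and> Lpnorm M p (\<lambda>\<omega>. Y \<omega> - X \<omega>) < \<epsilon>} \<subseteq> S))"

text \<open>Cones C = L^p(R^n_+), D = L^p(R_+) and their quasi-interiors C#, D#.\<close>
definition Lp_cone :: "'a measure \<Rightarrow> ennreal \<Rightarrow> ('a \<Rightarrow> 'b::{euclidean_space,ord}) set" where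
  "Lp_cone M p = {X. memLp M p X \<and> (AE \<omega> in M. 0 \<le> X \<omega>)}"

definition Lp_cone_sharp :: "'a measure \<Rightarrow> ennreal \<Rightarrow> ('a \<Rightarrow> 'b::{euclidean_space,ord}) set" where
  "Lp_cone_sharp M p = {X \<in> Lp_cone M p.
     \<forall>Z \<in> Lp_cone M (conj_exp p). \<not> (AE \<omega> in M. Z \<omega> = 0) \<longrightarrow> pairing M Z X > 0}"

definition aggregation_function :: "'a measure \<Rightarrow> ennreal \<Rightarrow> (real^'n \<Rightarrow> real) \<Rightarrow> bool" where
  "aggregation_function M p f \<longleftrightarrow> (\<forall>x y. x \<le> y \<longrightarrow> f x \<le> f y) \<and>
     (\<forall>X. memLp M p X \<longrightarrow> memLp M p (\<lambda>\<omega>. f (X \<omega>)))"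

definition regularly_increasing_fun :: "(real^'n \<Rightarrow> real) \<Rightarrow> bool" where
  "regularly_increasing_fun f \<longleftrightarrow> (\<forall>x y. x \<le> y \<longrightarrow> f x \<le> f y) \<and>
     (\<forall>x y. (\<forall>i. x $ i < y $ i) \<longrightarrow> f x < f y)"

definition induced :: "(real^'n \<Rightarrow> real) \<Rightarrow> ('a \<Rightarrow> real^'n) \<Rightarrow> ('a \<Rightarrow> real)" where
  "induced f X = (\<lambda>\<omega>. f (X \<omega>))"

definition Lp_concave :: "'a measure \<Rightarrow> ennreal \<Rightarrow> (('a \<Rightarrow> real^'n) \<Rightarrow> ('a \<Rightarrow> real)) \<Rightarrow> bool" where
  "Lp_concave M p L \<longleftrightarrow> (\<forall>X1 X2 (t::real). memLp M p X1 \<and> memLp M p X2 \<and> 0 < t \<and> t < 1 \<longrightarrow>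
     (AE \<omega> in M. L (\<lambda>\<omega>'. t *\<^sub>R X1 \<omega>' + (1 - t) *\<^sub>R X2 \<omega>') \<omega> \<ge> t * L X1 \<omega> + (1 - t) * L X2 \<omega>))"

definition Lp_linear :: "'a measure \<Rightarrow> ennreal \<Rightarrow> (('a \<Rightarrow> real^'n) \<Rightarrow> ('a \<Rightarrow> real)) \<Rightarrow> bool" where
  "Lp_linear M p L \<longleftrightarrow> (\<forall>X1 X2 (a::real) (b::real). memLp M p X1 \<and> memLp M p X2 \<longrightarrow>
     (AE \<omega> in M. L (\<lambda>\<omega>'. a *\<^sub>R X1 \<omega>' + b *\<^sub>R X2 \<omega>') \<omega> = a * L X1 \<omega> + b * L X2 \<omega>))"

definition Lp_lower_demicontinuous ::
  "'a measure \<Rightarrow> ennreal \<Rightarrow> (('a \<Rightarrow> real^'n) \<Rightarrow> ('a \<Rightarrow> real)) \<Rightarrow> bool" where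
  "Lp_lower_demicontinuous M p L \<longleftrightarrow>
     (\<forall>(Ys :: 'a \<Rightarrow> real) (c::real). memLp M (conj_exp p) Ys \<and> \<not> (AE \<omega> in M. Ys \<omega> = 0) \<longrightarrow>
        Lp_open M p {X. memLp M p X \<and>
          (\<exists>D \<in> Lp_cone M p. pairing M Ys (\<lambda>\<omega>. L X \<omega> + D \<omega>) > c)})"

definition Lp_regularly_increasing ::
  "'a measure \<Rightarrow> ennreal \<Rightarrow> (('a \<Rightarrow> real^'n) \<Rightarrow> ('a \<Rightarrow> real)) \<Rightarrow> bool" where
  "Lp_regularly_increasing M p L \<longleftrightarrow> (\<forall>X1 X2. memLp M p X1 \<and> memLp M p X2 \<longrightarrow>
     ((\<lambda>\<omega>. X2 \<omega> - X1 \<omega>) \<in> Lp_cone M p \<longrightarrow> (\<lambda>\<omega>. L X2 \<omega> - L X1 \<omega>) \<in> Lp_cone M p) \<and>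
     ((\<lambda>\<omega>. X2 \<omega> - X1 \<omega>) \<in> Lp_cone_sharp M p \<longrightarrow> (\<lambda>\<omega>. L X2 \<omega> - L X1 \<omega>) \<in> Lp_cone_sharp M p))"

end

theory Submission
  imports Defs
begin

text \<open>
  Concavity, linearity and regular monotonicity of \<open>\<Lambda>\<close> are pointwise consequences of the
  corresponding properties of \<open>f\<close>; for \<open>C\<^sup>#\<close>, testing against indicators of the sets where a
  component of \<open>X\<^sub>2 - X\<^sub>1\<close> is non-positive shows that all components are positive almost surely,
  so \<open>f(X\<^sub>2) - f(X\<^sub>1) > 0\<close> almost surely, and such a function lies in \<open>D\<^sup>#\<close>.

  For lower demicontinuity, let \<open>E[Y\<^sup>* (f(X) + D)] > c\<close>. Near \<open>X\<close>, losses of \<open>f(Y)\<close> where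
  \<open>Y\<^sup>* \<ge> 0\<close> are absorbed into the cone element \<open>D\<close>, so it suffices that
  \<open>E[u (f(Y) - f(X))]\<close> is small near \<open>X\<close> for \<open>u \<ge> 0\<close> in \<open>L\<^sup>q\<close> (here \<open>u\<close> is the negative part of
  \<open>Y\<^sup>*\<close>). This follows from a random affine majorant \<open>f(y) \<le> f(X) + V\<cdot>(y - X) + r\<close> with \<open>V\<close>
  bounded and measurable and \<open>E[u r]\<close> small, because \<open>Y \<mapsto> E[u V\<cdot>(Y - X)]\<close> is continuous both
  in norm (Young's inequality) and, as \<open>u V \<in> L\<^sup>1\<close>, in the weak* topology. For linear \<open>f\<close>, \<open>V\<close> is
  the representing vector and \<open>r = 0\<close>. For concave \<open>f \<le> B\<close>, \<open>V\<close> is an approximate supergradient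
  at \<open>X\<close> on a large ball, outside of which \<open>r = B - f(X)\<close> costs little by dominated convergence.
\<close>

section \<open>Integrability in \<open>L\<^sup>p\<close>\<close>

lemma conj_exp_cases:
  assumes "1 \<le> p"
  obtains "p = 1" "conj_exp p = \<infinity>"
    | "p = \<infinity>" "conj_exp p = 1"
    | P Q where "p = ennreal P" "conj_exp p = ennreal Q" "1 < P" "1 < Q" "1 / P + 1 / Q = 1"
proof -
  consider "p = 1" | "p = \<infinity>" | "p \<noteq> 1" "p \<noteq> \<infinity>" by blast
  then show thesis
  proof cases
    case 3
    define P where "P = enn2real p"
    have p_eq: "p = ennreal P"
      using 3 by (simp add: P_def ennreal_enn2real_if)
    have "1 \<le> P"
      using assms 3 by (metis P_def enn2real_1 enn2real_mono infinity_ennreal_def top.not_eq_extremum)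
    moreover have "P \<noteq> 1"
      using 3 p_eq by auto
    ultimately have "1 < P"
      by simp
    show thesis
    proof (rule that(3))
      show "p = ennreal P" by fact
      show "conj_exp p = ennreal (P / (P - 1))"
        using 3 by (simp add: conj_exp_def P_def)
      show "1 < P" by fact
      show "1 < P / (P - 1)" "1 / P + 1 / (P / (P - 1)) = 1"
        using \<open>1 < P\<close> by (simp_all add: field_simps)
    qed
  qed (use that in \<open>auto simp: conj_exp_def\<close>)
qed

lemma one_le_conj_exp: "1 \<le> p \<Longrightarrow> 1 \<le> conj_exp p"
  by (erule conj_exp_cases) (auto simp: ennreal_1[symmetric] simp del: ennreal_1)

lemma powr_add_le:
  fixes a b P :: real
  assumes "0 \<le> a" "0 \<le> b" "0 \<le> P"
  shows "(a + b) powr P \<le> 2 powr P * (a powr P + b powr P)"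
proof -
  have "(a + b) powr P \<le> (2 * max a b) powr P"
    using assms by (intro powr_mono2) auto
  also have "\<dots> = 2 powr P * max a b powr P"
    using assms by (simp add: powr_mult)
  also have "max a b powr P \<le> a powr P + b powr P"
    by (simp add: max_def)
  finally show ?thesis
    by simp
qed

lemma Youngs_inequality_weighted:
  fixes P Q a b t :: real
  assumes "1 < P" "1 < Q" "1 / P + 1 / Q = 1" "0 \<le> a" "0 \<le> b" "0 < t"
  shows "a * b \<le> t powr P * a powr P + b powr Q / t powr Q"
proof -
  have "a * b = (t * a) * (b / t)"
    using assms by simp
  also have "\<dots> \<le> (t * a) powr P / P + (b / t) powr Q / Q"
    using assms by (intro Youngs_inequality) auto
  also have "(t * a) powr P / P \<le> t powr P * a powr P"
    using assms by (simp add: powr_mult divide_le_eq mult_le_cancel_left1 not_less)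
  also have "(b / t) powr Q / Q \<le> b powr Q / t powr Q"
    using assms by (simp add: powr_divide divide_le_eq mult_le_cancel_left1)
  finally show ?thesis
    by simp
qed

lemma integral_abs_mult_le_weighted:
  fixes z h :: "'a \<Rightarrow> real"
  assumes PQ: "1 < P" "1 < Q" "1 / P + 1 / Q = 1" and "0 < t"
    and meas: "z \<in> borel_measurable M" "h \<in> borel_measurable M"
    and int: "integrable M (\<lambda>\<omega>. \<bar>h \<omega>\<bar> powr P)" "integrable M (\<lambda>\<omega>. \<bar>z \<omega>\<bar> powr Q)"
  shows "(\<integral>\<omega>. \<bar>z \<omega>\<bar> * \<bar>h \<omega>\<bar> \<partial>M)
    \<le> t powr P * (\<integral>\<omega>. \<bar>h \<omega>\<bar> powr P \<partial>M) + (\<integral>\<omega>. \<bar>z \<omega>\<bar> powr Q \<partial>M) / t powr Q"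
proof -
  have Young: "\<bar>z \<omega>\<bar> * \<bar>h \<omega>\<bar> \<le> t powr P * \<bar>h \<omega>\<bar> powr P + \<bar>z \<omega>\<bar> powr Q / t powr Q" for \<omega>
    using Youngs_inequality_weighted[of P Q "\<bar>h \<omega>\<bar>" "\<bar>z \<omega>\<bar>" t] PQ \<open>0 < t\<close>
    by (simp add: mult.commute)
  have int_bound: "integrable M (\<lambda>\<omega>. t powr P * \<bar>h \<omega>\<bar> powr P + \<bar>z \<omega>\<bar> powr Q / t powr Q)"
    using int by simp
  have "(\<integral>\<omega>. \<bar>z \<omega>\<bar> * \<bar>h \<omega>\<bar> \<partial>M)
      \<le> (\<integral>\<omega>. t powr P * \<bar>h \<omega>\<bar> powr P + \<bar>z \<omega>\<bar> powr Q / t powr Q \<partial>M)"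
  proof (rule integral_mono[OF _ int_bound Young])
    show "integrable M (\<lambda>\<omega>. \<bar>z \<omega>\<bar> * \<bar>h \<omega>\<bar>)"
    proof (rule Bochner_Integration.integrable_bound[OF int_bound])
      show "AE \<omega> in M. norm (\<bar>z \<omega>\<bar> * \<bar>h \<omega>\<bar>)
          \<le> norm (t powr P * \<bar>h \<omega>\<bar> powr P + \<bar>z \<omega>\<bar> powr Q / t powr Q)"
        using Young order_trans[OF _ abs_ge_self] by (simp add: abs_mult)
    qed (use meas in measurable)
  qed
  also have "\<dots> = t powr P * (\<integral>\<omega>. \<bar>h \<omega>\<bar> powr P \<partial>M) + (\<integral>\<omega>. \<bar>z \<omega>\<bar> powr Q \<partial>M) / t powr Q"
    using int by simp
  finally show ?thesis .
qed

lemma integral_powr_less_if_Lpnorm_less: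
  assumes "0 < P" "Lpnorm M (ennreal P) h < \<epsilon>"
  shows "(\<integral>\<omega>. norm (h \<omega>) powr P \<partial>M) < \<epsilon> powr P"
proof -
  let ?I = "\<integral>\<omega>. norm (h \<omega>) powr P \<partial>M"
  have "0 \<le> ?I"
    by (intro integral_nonneg_AE) auto
  then have "?I = (?I powr (1 / P)) powr P"
    using assms(1) by (simp add: powr_powr)
  also have "\<dots> < \<epsilon> powr P"
    using assms \<open>0 \<le> ?I\<close> by (intro powr_less_mono2) (auto simp: Lpnorm_def)
  finally show ?thesis .
qed

lemma memLp_borel_measurable: "memLp M p X \<Longrightarrow> X \<in> borel_measurable M"
  by (simp add: memLp_def)

context prob_space
begin

lemma memLp_AE_bounded:
  assumes "X \<in> borel_measurable M" "AE \<omega> in M. norm (X \<omega>) \<le> C"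
  shows "memLp M p X"
proof (cases "p = \<infinity>")
  case False
  have "integrable M (\<lambda>\<omega>. norm (X \<omega>) powr enn2real p)"
  proof (rule Bochner_Integration.integrable_bound)
    show "integrable M (\<lambda>_. max C 0 powr enn2real p)"
      by simp
    show "AE \<omega> in M. norm (norm (X \<omega>) powr enn2real p) \<le> norm (max C 0 powr enn2real p)"
      using assms(2) by eventually_elim (auto intro!: powr_mono2)
  qed (use assms(1) in measurable)
  then show ?thesis
    using False assms by (simp add: memLp_def)
qed (use assms in \<open>auto simp: memLp_def\<close>)

lemma memLp_dominated_sum:
  assumes X: "memLp M p X" and Y: "memLp M p Y" and Z: "Z \<in> borel_measurable M" and "0 \<le> c"
    and bound: "AE \<omega> in M. norm (Z \<omega>) \<le> c * (norm (X \<omega>) + norm (Y \<omega>))"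
  shows "memLp M p Z"
proof (cases "p = \<infinity>")
  case True
  then obtain C\<^sub>X C\<^sub>Y where "AE \<omega> in M. norm (X \<omega>) \<le> C\<^sub>X" "AE \<omega> in M. norm (Y \<omega>) \<le> C\<^sub>Y"
    using X Y by (auto simp: memLp_def)
  with bound have "AE \<omega> in M. norm (Z \<omega>) \<le> c * (C\<^sub>X + C\<^sub>Y)"
    by eventually_elim (use \<open>0 \<le> c\<close> in \<open>smt (verit) mult_left_mono\<close>)
  then show ?thesis
    using Z memLp_AE_bounded by blast
next
  case False
  let ?P = "enn2real p"
  have "integrable M (\<lambda>\<omega>. norm (Z \<omega>) powr ?P)"
  proof (rule Bochner_Integration.integrable_bound)
    show "integrable M (\<lambda>\<omega>. c powr ?P * 2 powr ?P * (norm (X \<omega>) powr ?P + norm (Y \<omega>) powr ?P))"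
      using X Y False by (simp add: memLp_def)
    show "AE \<omega> in M. norm (norm (Z \<omega>) powr ?P)
        \<le> norm (c powr ?P * 2 powr ?P * (norm (X \<omega>) powr ?P + norm (Y \<omega>) powr ?P))"
      using bound
    proof eventually_elim
      case (elim \<omega>)
      have "norm (Z \<omega>) powr ?P \<le> (c * (norm (X \<omega>) + norm (Y \<omega>))) powr ?P"
        using elim by (intro powr_mono2) auto
      also have "\<dots> \<le> c powr ?P * (2 powr ?P * (norm (X \<omega>) powr ?P + norm (Y \<omega>) powr ?P))"
        using \<open>0 \<le> c\<close> by (simp add: powr_mult powr_add_le mult_left_mono)
      finally show ?case
        by (simp add: mult.assoc)
    qed
  qed (use Z in measurable)
  then show ?thesis
    using False Z by (simp add: memLp_def)
qed

lemma memLp_dominated: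
  fixes X :: "'a \<Rightarrow> 'b::euclidean_space" and Y :: "'a \<Rightarrow> 'c::euclidean_space"
  assumes "memLp M p X" "Y \<in> borel_measurable M" "0 \<le> c"
    and "AE \<omega> in M. norm (Y \<omega>) \<le> c * norm (X \<omega>)"
  shows "memLp M p Y"
proof (rule memLp_dominated_sum[of p X X _ "c / 2"])
  show "AE \<omega> in M. norm (Y \<omega>) \<le> c / 2 * (norm (X \<omega>) + norm (X \<omega>))"
    using assms(4) by simp
qed (use assms in auto)

lemma memLp_add:
  fixes X Y :: "'a \<Rightarrow> 'b::euclidean_space"
  assumes "memLp M p X" "memLp M p Y"
  shows "memLp M p (\<lambda>\<omega>. X \<omega> + Y \<omega>)"
proof (rule memLp_dominated_sum[of p X Y _ 1])
  show "(\<lambda>\<omega>. X \<omega> + Y \<omega>) \<in> borel_measurable M"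
    using assms unfolding memLp_def by (intro borel_measurable_add) auto
  show "AE \<omega> in M. norm (X \<omega> + Y \<omega>) \<le> 1 * (norm (X \<omega>) + norm (Y \<omega>))"
    by (simp add: norm_triangle_ineq)
qed (use assms in auto)

lemma memLp_diff:
  fixes X Y :: "'a \<Rightarrow> 'b::euclidean_space"
  assumes "memLp M p X" "memLp M p Y"
  shows "memLp M p (\<lambda>\<omega>. X \<omega> - Y \<omega>)"
proof (rule memLp_dominated_sum[of p X Y _ 1])
  show "(\<lambda>\<omega>. X \<omega> - Y \<omega>) \<in> borel_measurable M"
    using assms unfolding memLp_def by (intro borel_measurable_diff) auto
  show "AE \<omega> in M. norm (X \<omega> - Y \<omega>) \<le> 1 * (norm (X \<omega>) + norm (Y \<omega>))"
    by (simp add: norm_triangle_ineq4)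
qed (use assms in auto)

lemma memLp_norm: "memLp M p X \<Longrightarrow> memLp M p (\<lambda>\<omega>. norm (X \<omega>))"
  by (rule memLp_dominated[of p X _ 1]) (auto simp: memLp_def)

lemma memLp_inner_bounded:
  fixes X V :: "'a \<Rightarrow> 'b::euclidean_space"
  assumes X: "memLp M p X" and V: "V \<in> borel_measurable M" and bound: "\<forall>\<omega>. norm (V \<omega>) \<le> L"
  shows "memLp M p (\<lambda>\<omega>. V \<omega> \<bullet> X \<omega>)"
proof (rule memLp_dominated[of p X _ L])
  show "(\<lambda>\<omega>. V \<omega> \<bullet> X \<omega>) \<in> borel_measurable M"
    using X V unfolding memLp_def by (intro borel_measurable_inner) auto
  show "0 \<le> L"
    using bound norm_ge_zero order_trans by blast
  have "norm (V \<omega> \<bullet> X \<omega>) \<le> L * norm (X \<omega>)" for \<omega>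
    using Cauchy_Schwarz_ineq2[of "V \<omega>" "X \<omega>"] bound
    by (simp add: mult_right_mono order_trans)
  then show "AE \<omega> in M. norm (V \<omega> \<bullet> X \<omega>) \<le> L * norm (X \<omega>)"
    by simp
qed (fact X)

lemma memLp_integrable:
  fixes X :: "'a \<Rightarrow> 'b::euclidean_space"
  assumes "1 \<le> p" "memLp M p X"
  shows "integrable M X"
proof (cases "p = \<infinity>")
  case True
  then obtain C where "AE \<omega> in M. norm (X \<omega>) \<le> C"
    using assms by (auto simp: memLp_def)
  then show ?thesis
    using assms by (intro integrable_const_bound) (auto simp: memLp_def)
next
  case False
  let ?P = "enn2real p"
  have "1 \<le> ?P"
    using assms False by (metis enn2real_1 enn2real_mono infinity_ennreal_def top.not_eq_extremum)
  have bound: "norm (X \<omega>) \<le> 1 + norm (X \<omega>) powr ?P" for \<omega>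
  proof (cases "norm (X \<omega>) \<le> 1")
    case True
    then show ?thesis
      using powr_ge_zero[of "norm (X \<omega>)" ?P] by linarith
  next
    case False
    then have "norm (X \<omega>) powr 1 \<le> norm (X \<omega>) powr ?P"
      using \<open>1 \<le> ?P\<close> by (intro powr_mono) auto
    then show ?thesis
      by simp
  qed
  have "integrable M (\<lambda>\<omega>. 1 + norm (X \<omega>) powr ?P)"
    using assms False by (simp add: memLp_def)
  then show ?thesis
  proof (rule Bochner_Integration.integrable_bound)
    show "X \<in> borel_measurable M"
      using assms(2) by (simp add: memLp_def)
    show "AE \<omega> in M. norm (X \<omega>) \<le> norm (1 + norm (X \<omega>) powr ?P)"
      using bound by (simp add: add_nonneg_nonneg)
  qed
qed

lemma integrable_mult_AE_bounded:
  fixes z g :: "'a \<Rightarrow> real"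
  assumes "integrable M g" "z \<in> borel_measurable M" "AE \<omega> in M. \<bar>z \<omega>\<bar> \<le> C"
  shows "integrable M (\<lambda>\<omega>. z \<omega> * g \<omega>)"
proof (rule Bochner_Integration.integrable_bound)
  show "integrable M (\<lambda>\<omega>. \<bar>C\<bar> * g \<omega>)"
    using assms(1) by simp
  show "(\<lambda>\<omega>. z \<omega> * g \<omega>) \<in> borel_measurable M"
    using assms(1,2) by measurable
  show "AE \<omega> in M. norm (z \<omega> * g \<omega>) \<le> norm (\<bar>C\<bar> * g \<omega>)"
    using assms(3) by eventually_elim (simp add: abs_mult mult_right_mono)
qed

lemma integrable_mult_conj_exp:
  fixes z g :: "'a \<Rightarrow> real"
  assumes p: "1 \<le> p" and z: "memLp M (conj_exp p) z" and g: "memLp M p g"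
  shows "integrable M (\<lambda>\<omega>. z \<omega> * g \<omega>)"
  using p
proof (cases rule: conj_exp_cases)
  case 1
  then obtain C where "AE \<omega> in M. \<bar>z \<omega>\<bar> \<le> C"
    using z by (auto simp: memLp_def)
  then show ?thesis
    using z memLp_integrable[OF p g] by (intro integrable_mult_AE_bounded) (auto simp: memLp_def)
next
  case 2
  then obtain C where "AE \<omega> in M. \<bar>g \<omega>\<bar> \<le> C"
    using g by (auto simp: memLp_def)
  then have "integrable M (\<lambda>\<omega>. g \<omega> * z \<omega>)"
    using g memLp_integrable[OF one_le_conj_exp[OF p] z]
    by (intro integrable_mult_AE_bounded) (auto simp: memLp_def)
  then show ?thesis
    by (simp add: mult.commute)
next
  case (3 P Q)
  have "integrable M (\<lambda>\<omega>. \<bar>g \<omega>\<bar> powr P / P + \<bar>z \<omega>\<bar> powr Q / Q)"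
    using z g 3 by (simp add: memLp_def)
  then show ?thesis
  proof (rule Bochner_Integration.integrable_bound)
    show "(\<lambda>\<omega>. z \<omega> * g \<omega>) \<in> borel_measurable M"
      using z g unfolding memLp_def by (intro borel_measurable_times) auto
    have "\<bar>g \<omega>\<bar> * \<bar>z \<omega>\<bar> \<le> \<bar>g \<omega>\<bar> powr P / P + \<bar>z \<omega>\<bar> powr Q / Q" for \<omega>
      using 3 by (intro Youngs_inequality) auto
    moreover have "0 \<le> \<bar>g \<omega>\<bar> powr P / P + \<bar>z \<omega>\<bar> powr Q / Q" for \<omega>
      using 3 by simp
    ultimately show "AE \<omega> in M. norm (z \<omega> * g \<omega>) \<le> norm (\<bar>g \<omega>\<bar> powr P / P + \<bar>z \<omega>\<bar> powr Q / Q)"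
      by (simp add: abs_mult mult.commute)
  qed
qed

lemma integral_abs_mult_small_L1:
  fixes z :: "'a \<Rightarrow> real"
  assumes "memLp M \<infinity> z" and "0 < \<delta>"
  obtains \<epsilon> where "0 < \<epsilon>"
    "\<And>h. memLp M 1 h \<Longrightarrow> Lpnorm M 1 h < \<epsilon> \<Longrightarrow> (\<integral>\<omega>. \<bar>z \<omega>\<bar> * \<bar>h \<omega>\<bar> \<partial>M) < \<delta>"
proof -
  obtain C where C: "AE \<omega> in M. \<bar>z \<omega>\<bar> \<le> C"
    using assms(1) by (auto simp: memLp_def)
  define K where "K = max C 0 + 1"
  have "0 < K"
    by (simp add: K_def)
  show thesis
  proof (rule that)
    show "0 < \<delta> / K"
      using \<open>0 < K\<close> \<open>0 < \<delta>\<close> by simp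
    fix h :: "'a \<Rightarrow> real"
    assume h: "memLp M 1 h" "Lpnorm M 1 h < \<delta> / K"
    have "integrable M h"
      using memLp_integrable[OF order_refl h(1)] .
    have "(\<integral>\<omega>. \<bar>z \<omega>\<bar> * \<bar>h \<omega>\<bar> \<partial>M) \<le> (\<integral>\<omega>. K * \<bar>h \<omega>\<bar> \<partial>M)"
    proof (rule integral_mono_AE)
      show "integrable M (\<lambda>\<omega>. \<bar>z \<omega>\<bar> * \<bar>h \<omega>\<bar>)"
        using \<open>integrable M h\<close> C memLp_borel_measurable[OF assms(1)]
        by (intro integrable_mult_AE_bounded[of _ _ C]) auto
      show "AE \<omega> in M. \<bar>z \<omega>\<bar> * \<bar>h \<omega>\<bar> \<le> K * \<bar>h \<omega>\<bar>"
        using C by eventually_elim (auto simp: K_def intro!: mult_right_mono)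
    qed (use \<open>integrable M h\<close> in simp)
    also have "\<dots> = K * Lpnorm M 1 h"
      by (simp add: Lpnorm_def)
    also have "\<dots> < \<delta>"
      using h(2) \<open>0 < K\<close> by (simp add: field_simps)
    finally show "(\<integral>\<omega>. \<bar>z \<omega>\<bar> * \<bar>h \<omega>\<bar> \<partial>M) < \<delta>" .
  qed
qed

lemma integral_abs_mult_small_Young:
  fixes z :: "'a \<Rightarrow> real"
  assumes PQ: "1 < P" "1 < Q" "1 / P + 1 / Q = 1" and z: "memLp M (ennreal Q) z" and "0 < \<delta>"
  obtains \<epsilon> where "0 < \<epsilon>" "\<And>h. memLp M (ennreal P) h \<Longrightarrow> Lpnorm M (ennreal P) h < \<epsilon> \<Longrightarrow>
    (\<integral>\<omega>. \<bar>z \<omega>\<bar> * \<bar>h \<omega>\<bar> \<partial>M) < \<delta>"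
proof -
  define A where "A = (\<integral>\<omega>. \<bar>z \<omega>\<bar> powr Q \<partial>M)"
  have "0 \<le> A"
    unfolding A_def by (intro integral_nonneg_AE) auto
  \<comment> \<open>Weight Young's inequality so that the contribution of \<open>z\<close> is below \<open>\<delta> / 2\<close>.\<close>
  define t where "t = (2 * A / \<delta> + 1) powr (1 / Q)"
  have "0 < 2 * A / \<delta> + 1"
    using \<open>0 \<le> A\<close> \<open>0 < \<delta>\<close> by (simp add: add_nonneg_pos)
  then have "0 < t" and "t powr Q = 2 * A / \<delta> + 1"
    using PQ by (simp_all add: t_def powr_powr)
  then have z_part: "A / t powr Q < \<delta> / 2"
    using \<open>0 \<le> A\<close> \<open>0 < \<delta>\<close> by (simp add: field_simps)
  show thesis
  proof (rule that)
    show "0 < (\<delta> / (2 * t powr P)) powr (1 / P)"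
      using \<open>0 < \<delta>\<close> \<open>0 < t\<close> by simp
    fix h :: "'a \<Rightarrow> real"
    assume h: "memLp M (ennreal P) h" "Lpnorm M (ennreal P) h < (\<delta> / (2 * t powr P)) powr (1 / P)"
    have "(\<integral>\<omega>. \<bar>h \<omega>\<bar> powr P \<partial>M) < ((\<delta> / (2 * t powr P)) powr (1 / P)) powr P"
      using integral_powr_less_if_Lpnorm_less[OF _ h(2)] PQ by simp
    also have "\<dots> = \<delta> / (2 * t powr P)"
      using \<open>0 < \<delta>\<close> \<open>0 < t\<close> PQ by (simp add: powr_powr)
    finally have h_part: "t powr P * (\<integral>\<omega>. \<bar>h \<omega>\<bar> powr P \<partial>M) < \<delta> / 2"
      using \<open>0 < t\<close> by (simp add: field_simps)
    have "(\<integral>\<omega>. \<bar>z \<omega>\<bar> * \<bar>h \<omega>\<bar> \<partial>M) \<le> t powr P * (\<integral>\<omega>. \<bar>h \<omega>\<bar> powr P \<partial>M) + A / t powr Q"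
      unfolding A_def using z h(1) PQ \<open>0 < t\<close>
      by (intro integral_abs_mult_le_weighted) (auto simp: memLp_def)
    with h_part z_part show "(\<integral>\<omega>. \<bar>z \<omega>\<bar> * \<bar>h \<omega>\<bar> \<partial>M) < \<delta>"
      by linarith
  qed
qed

lemma integral_abs_mult_small:
  fixes z :: "'a \<Rightarrow> real"
  assumes p: "1 \<le> p" "p \<noteq> \<infinity>" and z: "memLp M (conj_exp p) z" and "0 < \<delta>"
  obtains \<epsilon> where "0 < \<epsilon>"
    "\<And>h. memLp M p h \<Longrightarrow> Lpnorm M p h < \<epsilon> \<Longrightarrow> (\<integral>\<omega>. \<bar>z \<omega>\<bar> * \<bar>h \<omega>\<bar> \<partial>M) < \<delta>"
  using p(1)
proof (cases rule: conj_exp_cases)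
  case 1
  with z have "memLp M \<infinity> z"
    by simp
  then show thesis
  proof (rule integral_abs_mult_small_L1[OF _ \<open>0 < \<delta>\<close>])
    fix \<epsilon>
    assume "0 < \<epsilon>" "\<And>h. memLp M 1 h \<Longrightarrow> Lpnorm M 1 h < \<epsilon> \<Longrightarrow> (\<integral>\<omega>. \<bar>z \<omega>\<bar> * \<bar>h \<omega>\<bar> \<partial>M) < \<delta>"
    with 1 show thesis
      by (intro that) auto
  qed
next
  case 2
  with p(2) show thesis
    by simp
next
  case (3 P Q)
  with z have "memLp M (ennreal Q) z"
    by simp
  then show thesis
  proof (rule integral_abs_mult_small_Young[OF 3(3-5) _ \<open>0 < \<delta>\<close>])
    fix \<epsilon>
    assume "0 < \<epsilon>" "\<And>h. memLp M (ennreal P) h \<Longrightarrow> Lpnorm M (ennreal P) h < \<epsilon> \<Longrightarrow>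
      (\<integral>\<omega>. \<bar>z \<omega>\<bar> * \<bar>h \<omega>\<bar> \<partial>M) < \<delta>"
    with 3 show thesis
      by (intro that) auto
  qed
qed

lemma integral_mult_inner_le:
  fixes u :: "'a \<Rightarrow> real" and W V :: "'a \<Rightarrow> 'b::euclidean_space"
  assumes p: "1 \<le> p" and u: "memLp M (conj_exp p) u" and W: "memLp M p W"
    and V: "V \<in> borel_measurable M" and V_bound: "\<forall>\<omega>. norm (V \<omega>) \<le> L"
  shows "(\<integral>\<omega>. u \<omega> * (V \<omega> \<bullet> W \<omega>) \<partial>M) \<le> L * (\<integral>\<omega>. \<bar>u \<omega>\<bar> * norm (W \<omega>) \<partial>M)"
proof -
  have "(\<integral>\<omega>. u \<omega> * (V \<omega> \<bullet> W \<omega>) \<partial>M) \<le> (\<integral>\<omega>. L * (\<bar>u \<omega>\<bar> * norm (W \<omega>)) \<partial>M)"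
  proof (rule integral_mono)
    show "integrable M (\<lambda>\<omega>. u \<omega> * (V \<omega> \<bullet> W \<omega>))"
      by (rule integrable_mult_conj_exp[OF p u memLp_inner_bounded[OF W V V_bound]])
    show "integrable M (\<lambda>\<omega>. L * (\<bar>u \<omega>\<bar> * norm (W \<omega>)))"
      using integrable_mult_conj_exp[OF p memLp_norm[OF u] memLp_norm[OF W]] by simp
    show "u \<omega> * (V \<omega> \<bullet> W \<omega>) \<le> L * (\<bar>u \<omega>\<bar> * norm (W \<omega>))" for \<omega>
    proof -
      have "\<bar>V \<omega> \<bullet> W \<omega>\<bar> \<le> L * norm (W \<omega>)"
        using Cauchy_Schwarz_ineq2[of "V \<omega>" "W \<omega>"] V_bound by (simp add: mult_right_mono order_trans)
      then have "\<bar>u \<omega> * (V \<omega> \<bullet> W \<omega>)\<bar> \<le> \<bar>u \<omega>\<bar> * (L * norm (W \<omega>))"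
        by (simp add: abs_mult mult_left_mono)
      then show ?thesis
        by (simp add: algebra_simps)
    qed
  qed
  then show ?thesis
    by simp
qed
end

section \<open>Supergradients of concave functions\<close>

lemma convex_on_subgradient:
  fixes g :: "'a::euclidean_space \<Rightarrow> real"
  assumes "convex_on UNIV g"
  obtains c where "\<And>y. g v + c \<bullet> (y - v) \<le> g y"
proof -
  let ?S = "epigraph UNIV g" and ?T = "{v} \<times> {..<g v}"
  have "convex ?S" "convex ?T"
    using assms by (simp_all add: convex_epigraphI convex_Times)
  moreover have "?S \<noteq> {}" "?T \<noteq> {}" "?S \<inter> ?T = {}"
    by (auto simp: epigraph_def)
  ultimately obtain a b where "a \<noteq> 0" and S: "\<forall>z\<in>?S. a \<bullet> z \<le> b" and T: "\<forall>z\<in>?T. b \<le> a \<bullet> z"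
    by (metis separating_hyperplane_sets)
  define \<alpha> where "\<alpha> = fst a"
  define \<beta> where "\<beta> = snd a"
  have below: "\<alpha> \<bullet> x + \<beta> * g x \<le> b" for x
    using S[rule_format, of "(x, g x)"] by (simp add: \<alpha>_def \<beta>_def inner_prod_def epigraph_def)
  have above: "b \<le> \<alpha> \<bullet> v + \<beta> * (g v - s)" if "0 < s" for s
    using T[rule_format, of "(v, g v - s)"] that by (simp add: \<alpha>_def \<beta>_def inner_prod_def)
  have "\<beta> \<le> 0"
    using below[of v] above[of 1] by (simp add: algebra_simps)
  moreover have "\<beta> \<noteq> 0"
  proof
    assume "\<beta> = 0"
    then have "\<alpha> \<bullet> \<alpha> \<le> 0"
      using below[of "v + \<alpha>"] above[of 1] by (simp add: inner_add_right)
    then have "\<alpha> = 0"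
      by (metis inner_eq_zero_iff inner_ge_zero order_antisym)
    with \<open>\<beta> = 0\<close> \<open>a \<noteq> 0\<close> show False
      by (simp add: \<alpha>_def \<beta>_def prod_eq_iff)
  qed
  ultimately have "\<beta> < 0"
    by simp
  show thesis
  proof (rule that[of "- (1 / \<beta>) *\<^sub>R \<alpha>"])
    fix y
    have "\<alpha> \<bullet> y + \<beta> * g y \<le> \<alpha> \<bullet> v + \<beta> * g v"
    proof (rule field_le_epsilon)
      fix e :: real
      assume "0 < e"
      have "\<alpha> \<bullet> y + \<beta> * g y \<le> \<alpha> \<bullet> v + \<beta> * (g v - e / - \<beta>)"
        using \<open>0 < e\<close> \<open>\<beta> < 0\<close> by (intro order_trans[OF below above]) (simp add: divide_pos_neg)
      also have "\<dots> = \<alpha> \<bullet> v + \<beta> * g v + e"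
        using \<open>\<beta> < 0\<close> by (simp add: field_simps)
      finally show "\<alpha> \<bullet> y + \<beta> * g y \<le> \<alpha> \<bullet> v + \<beta> * g v + e" .
    qed
    then have "(g y - g v) * \<beta> \<le> \<alpha> \<bullet> v - \<alpha> \<bullet> y"
      by (simp add: algebra_simps)
    then have "(\<alpha> \<bullet> v - \<alpha> \<bullet> y) / \<beta> \<le> g y - g v"
      using \<open>\<beta> < 0\<close> by (simp add: neg_divide_le_eq)
    moreover have "(- (1 / \<beta>) *\<^sub>R \<alpha>) \<bullet> (y - v) = (\<alpha> \<bullet> v - \<alpha> \<bullet> y) / \<beta>"
      by (simp add: inner_diff_right diff_divide_distrib)
    ultimately show "g v + (- (1 / \<beta>) *\<^sub>R \<alpha>) \<bullet> (y - v) \<le> g y"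
      by linarith
  qed
qed

lemma concave_on_supergradient:
  fixes f :: "'a::euclidean_space \<Rightarrow> real"
  assumes "concave_on UNIV f"
  obtains c where "\<And>y. f y \<le> f v + c \<bullet> (y - v)"
proof -
  obtain c where "\<And>y. - f v + c \<bullet> (y - v) \<le> - f y"
    using convex_on_subgradient assms unfolding concave_on_def by blast
  then have "\<And>y. f y \<le> f v + (- c) \<bullet> (y - v)"
    by (simp add: algebra_simps)
  then show thesis ..
qed

lemma supergradient_norm_le:
  fixes f :: "'a::euclidean_space \<Rightarrow> real"
  assumes super: "\<And>y. f y \<le> f v + c \<bullet> (y - v)" and bound: "\<And>x. x \<in> cball v 1 \<Longrightarrow> \<bar>f x\<bar> \<le> K"
  shows "norm c \<le> 2 * K"
proof (cases "c = 0")
  case True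
  then show ?thesis
    using bound[of v] by simp
next
  case False
  define y where "y = v - (1 / norm c) *\<^sub>R c"
  have "y \<in> cball v 1"
    using False by (simp add: y_def dist_norm)
  have "c \<bullet> (y - v) = - norm c"
    using False by (simp add: y_def inner_commute power2_norm_eq_inner[symmetric] power2_eq_square)
  then have "norm c \<le> f v - f y"
    using super[of y] by simp
  also have "\<dots> \<le> 2 * K"
    using bound[of v] bound[OF \<open>y \<in> cball v 1\<close>] by simp
  finally show ?thesis .
qed

lemma concave_on_continuous:
  fixes f :: "'a::euclidean_space \<Rightarrow> real"
  assumes "concave_on UNIV f"
  shows "continuous_on UNIV f"
proof -
  have "continuous_on UNIV (\<lambda>x. - (- f x))"
    using assms unfolding concave_on_def by (intro continuous_on_minus convex_on_continuous) auto
  then show ?thesis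
    by simp
qed

lemma concave_on_bounded_supergradients:
  fixes f :: "'a::euclidean_space \<Rightarrow> real"
  assumes "concave_on UNIV f"
  obtains c :: "'a \<Rightarrow> 'a" and K where "\<And>v y. f y \<le> f v + c v \<bullet> (y - v)"
    and "\<And>v. norm v \<le> R \<Longrightarrow> norm (c v) \<le> K"
proof -
  define c where "c v = (SOME c. \<forall>y. f y \<le> f v + c \<bullet> (y - v))" for v
  have "\<exists>c. \<forall>y. f y \<le> f v + c \<bullet> (y - v)" for v
  proof -
    obtain c where "\<And>y. f y \<le> f v + c \<bullet> (y - v)"
      using concave_on_supergradient[OF assms, where v = v] by blast
    then show ?thesis
      by blast
  qed
  then have super: "\<forall>y. f y \<le> f v + c v \<bullet> (y - v)" for v
    unfolding c_def by (rule someI_ex)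
  have "bounded (f ` cball 0 (R + 1))"
    using concave_on_continuous[OF assms]
    by (intro compact_imp_bounded compact_continuous_image) (auto intro: continuous_on_subset)
  then obtain K where "\<forall>y\<in>f ` cball 0 (R + 1). norm y \<le> K"
    unfolding bounded_iff by blast
  then have K: "\<bar>f x\<bar> \<le> K" if "x \<in> cball 0 (R + 1)" for x
    using that by simp
  show thesis
  proof (rule that)
    show "f y \<le> f v + c v \<bullet> (y - v)" for v y
      using super by blast
    show "norm (c v) \<le> 2 * K" if "norm v \<le> R" for v
    proof (rule supergradient_norm_le)
      show "f y \<le> f v + c v \<bullet> (y - v)" for y
        using super by blast
      fix x
      assume "x \<in> cball v 1"
      then have "norm x \<le> R + 1"
        using that norm_triangle_sub[of x v] by (simp add: dist_norm norm_minus_commute)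
      then show "\<bar>f x\<bar> \<le> K"
        by (intro K) simp
    qed
  qed
qed

lemma borel_measurable_countable_approximation:
  fixes \<rho> :: real
  assumes "0 < \<rho>"
  obtains a :: "nat \<Rightarrow> 'a::{metric_space,second_countable_topology}" and J :: "'a \<Rightarrow> nat"
  where "J \<in> borel \<rightarrow>\<^sub>M count_space UNIV" "\<And>x. dist (a (J x)) x < \<rho>"
proof -
  obtain D :: "'a set" where "countable D" and dense: "\<And>X. open X \<Longrightarrow> X \<noteq> {} \<Longrightarrow> \<exists>d\<in>D. d \<in> X"
    using countable_dense_setE by blast
  define a where "a = from_nat_into D"
  define J where "J x = (LEAST k. dist (a k) x < \<rho>)" for x
  have "\<exists>k. dist (a k) x < \<rho>" for x
  proof -
    obtain d where "d \<in> D" "d \<in> ball x \<rho>"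
      using dense[of "ball x \<rho>"] \<open>0 < \<rho>\<close> by auto
    moreover obtain k where "a k = d"
      using from_nat_into_surj[OF \<open>countable D\<close> \<open>d \<in> D\<close>] by (auto simp: a_def)
    ultimately show ?thesis
      by (auto simp: dist_commute)
  qed
  then have "dist (a (J x)) x < \<rho>" for x
    unfolding J_def by (rule LeastI_ex)
  moreover have "J \<in> borel \<rightarrow>\<^sub>M count_space UNIV"
    unfolding J_def by measurable
  ultimately show thesis
    using that by blast
qed

lemma supergradient_at_nearby_point:
  fixes f :: "'a::real_inner \<Rightarrow> real"
  assumes super: "\<And>y. f y \<le> f v + c \<bullet> (y - v)"
    and "f v \<le> f x + e / 2" and "norm c * norm (x - v) \<le> e / 2"
  shows "f y \<le> f x + c \<bullet> (y - x) + e"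
proof -
  have "c \<bullet> (x - v) \<le> e / 2"
    using norm_cauchy_schwarz[of c "x - v"] assms(3) by linarith
  moreover have "c \<bullet> (y - v) = c \<bullet> (y - x) + c \<bullet> (x - v)"
    by (simp add: inner_diff_right)
  ultimately show ?thesis
    using super[of y] assms(2) by linarith
qed

text \<open>A choice of supergradients need not be measurable; composing it with a countably-valued
  measurable approximation of the identity makes it so, at the price of an error \<open>e\<close>.\<close>

lemma concave_on_measurable_approx_supergradient:
  fixes f :: "'a::euclidean_space \<Rightarrow> real"
  assumes conc: "concave_on UNIV f" and "0 < e"
  obtains W :: "'a \<Rightarrow> 'a" and L where "W \<in> borel_measurable borel"
    and "\<And>x. norm x \<le> R \<Longrightarrow> norm (W x) \<le> L"
    and "\<And>x y. norm x \<le> R \<Longrightarrow> f y \<le> f x + W x \<bullet> (y - x) + e"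
proof -
  obtain c K where super: "\<And>v y. f y \<le> f v + c v \<bullet> (y - v)"
    and c_bound: "\<And>v. norm v \<le> R + 1 \<Longrightarrow> norm (c v) \<le> K"
    using concave_on_bounded_supergradients[OF conc] by metis
  have "uniformly_continuous_on (cball 0 (R + 1)) f"
    using concave_on_continuous[OF conc]
    by (intro compact_uniformly_continuous) (auto intro: continuous_on_subset)
  then obtain \<delta> where "0 < \<delta>" and unif:
    "\<And>x x'. x \<in> cball 0 (R + 1) \<Longrightarrow> x' \<in> cball 0 (R + 1) \<Longrightarrow> dist x' x < \<delta> \<Longrightarrow> dist (f x') (f x) < e / 2"
    using \<open>0 < e\<close> unfolding uniformly_continuous_on_def by (metis half_gt_zero)
  define \<rho> where "\<rho> = min 1 (min \<delta> (e / (2 * (\<bar>K\<bar> + 1))))"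
  have "0 < \<rho>" "\<rho> \<le> 1" "\<rho> \<le> \<delta>"
    using \<open>0 < \<delta>\<close> \<open>0 < e\<close> by (auto simp: \<rho>_def)
  have "(\<bar>K\<bar> + 1) * \<rho> \<le> (\<bar>K\<bar> + 1) * (e / (2 * (\<bar>K\<bar> + 1)))"
    by (intro mult_left_mono) (auto simp: \<rho>_def)
  also have "\<dots> = e / 2"
    by (simp add: field_simps)
  finally have \<rho>_K: "(\<bar>K\<bar> + 1) * \<rho> \<le> e / 2" .
  obtain a :: "nat \<Rightarrow> 'a" and J where J_meas: "J \<in> borel \<rightarrow>\<^sub>M count_space UNIV"
    and J: "\<And>x. dist (a (J x)) x < \<rho>"
    using borel_measurable_countable_approximation[OF \<open>0 < \<rho>\<close>] by blast
  have W_meas: "(\<lambda>x. c (a (J x))) \<in> borel_measurable borel"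
    using measurable_compose[OF J_meas, of "\<lambda>k. c (a k)"] by simp
  show thesis
  proof (rule that[OF W_meas])
    fix x :: 'a
    assume x: "norm x \<le> R"
    let ?v = "a (J x)"
    have near: "norm ?v \<le> R + 1"
      using x J[of x] \<open>\<rho> \<le> 1\<close> norm_triangle_sub[of ?v x] by (simp add: dist_norm)
    show "norm (c ?v) \<le> K"
      by (rule c_bound[OF near])
    fix y
    show "f y \<le> f x + c ?v \<bullet> (y - x) + e"
    proof (rule supergradient_at_nearby_point[OF super])
      have "dist (f ?v) (f x) < e / 2"
        using unif[of x ?v] x near J[of x] \<open>\<rho> \<le> \<delta>\<close> by simp
      then show "f ?v \<le> f x + e / 2"
        unfolding dist_real_def using abs_ge_self[of "f ?v - f x"] by linarith
      have "norm (c ?v) * norm (x - ?v) \<le> (\<bar>K\<bar> + 1) * \<rho>"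
        using c_bound[OF near] J[of x] by (intro mult_mono) (auto simp: dist_norm norm_minus_commute)
      with \<rho>_K show "norm (c ?v) * norm (x - ?v) \<le> e / 2"
        by linarith
    qed
  qed
qed

lemma linear_eq_inner:
  fixes f :: "'a::euclidean_space \<Rightarrow> real"
  assumes "linear f"
  obtains w where "\<And>x. f x = w \<bullet> x"
proof
  fix x
  have "f x = (\<Sum>i\<in>Basis. x \<bullet> i * (f i \<bullet> 1))"
    using Linear_Algebra.linear_componentwise[OF assms, of x 1] by simp
  also have "\<dots> = (\<Sum>i\<in>Basis. f i *\<^sub>R i) \<bullet> x"
    by (simp add: inner_sum_left inner_commute[of x] mult.commute)
  finally show "f x = (\<Sum>i\<in>Basis. f i *\<^sub>R i) \<bullet> x" .
qed

section \<open>Neighbourhoods in \<open>L\<^sup>p\<close> and lower demicontinuity\<close>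

definition Lp_eventually_nhds ::
  "'a measure \<Rightarrow> ennreal \<Rightarrow> ('a \<Rightarrow> 'b::euclidean_space) \<Rightarrow> (('a \<Rightarrow> 'b) \<Rightarrow> bool) \<Rightarrow> bool" where
  "Lp_eventually_nhds M p X P \<longleftrightarrow> (if p = \<infinity> then
     (\<exists>Zs :: ('a \<Rightarrow> 'b) list. \<exists>\<epsilon>>0. (\<forall>Z\<in>set Zs. memLp M 1 Z) \<and>
        (\<forall>Y. memLp M \<infinity> Y \<and> (\<forall>Z\<in>set Zs. \<bar>pairing M Z (\<lambda>\<omega>. Y \<omega> - X \<omega>)\<bar> < \<epsilon>) \<longrightarrow> P Y))
   else (\<exists>\<epsilon>>0. \<forall>Y. memLp M p Y \<and> Lpnorm M p (\<lambda>\<omega>. Y \<omega> - X \<omega>) < \<epsilon> \<longrightarrow> P Y))"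

lemma Lp_eventually_nhds_mono:
  assumes "Lp_eventually_nhds M p X P" "\<And>Y. memLp M p Y \<Longrightarrow> P Y \<Longrightarrow> Q Y"
  shows "Lp_eventually_nhds M p X Q"
  using assms unfolding Lp_eventually_nhds_def by (cases "p = \<infinity>") (simp_all, metis+)

lemma Lp_openI:
  assumes "S \<subseteq> {X. memLp M p X}" "\<And>X. X \<in> S \<Longrightarrow> Lp_eventually_nhds M p X (\<lambda>Y. Y \<in> S)"
  shows "Lp_open M p S"
  using assms unfolding Lp_open_def Lp_eventually_nhds_def subset_iff mem_Collect_eq
  by (cases "p = \<infinity>") simp_all

context prob_space
begin

lemma Lp_eventually_nhds_integral_inner_less_weak_star:
  fixes u :: "'a \<Rightarrow> real" and X V :: "'a \<Rightarrow> 'b::euclidean_space"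
  assumes u: "memLp M 1 u" and V: "V \<in> borel_measurable M" and V_bound: "\<forall>\<omega>. norm (V \<omega>) \<le> L"
    and "0 < a"
  shows "Lp_eventually_nhds M \<infinity> X (\<lambda>Y. (\<integral>\<omega>. u \<omega> * (V \<omega> \<bullet> (Y \<omega> - X \<omega>)) \<partial>M) < a)"
proof -
  define Z where "Z = (\<lambda>\<omega>. u \<omega> *\<^sub>R V \<omega>)"
  have "memLp M 1 Z"
  proof (rule memLp_dominated[OF u])
    show "Z \<in> borel_measurable M"
      using memLp_borel_measurable[OF u] V unfolding Z_def by measurable
    show "0 \<le> L"
      using V_bound norm_ge_zero order_trans by blast
    have "norm (Z \<omega>) \<le> L * norm (u \<omega>)" for \<omega>
      using mult_left_mono[OF V_bound[rule_format, of \<omega>] abs_ge_zero[of "u \<omega>"]]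
      by (simp add: Z_def mult.commute)
    then show "AE \<omega> in M. norm (Z \<omega>) \<le> L * norm (u \<omega>)"
      by simp
  qed
  moreover have "pairing M Z (\<lambda>\<omega>. Y \<omega> - X \<omega>) = (\<integral>\<omega>. u \<omega> * (V \<omega> \<bullet> (Y \<omega> - X \<omega>)) \<partial>M)" for Y
    by (simp add: pairing_def Z_def)
  ultimately show ?thesis
    using \<open>0 < a\<close> unfolding Lp_eventually_nhds_def if_P[OF refl]
    by (intro exI[of _ "[Z]"] exI[of _ a]) (auto simp: abs_less_iff)
qed

lemma Lp_eventually_nhds_integral_inner_less_norm:
  fixes u :: "'a \<Rightarrow> real" and X V :: "'a \<Rightarrow> 'b::euclidean_space"
  assumes p: "1 \<le> p" "p \<noteq> \<infinity>" and u: "memLp M (conj_exp p) u" and X: "memLp M p X"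
    and V: "V \<in> borel_measurable M" and V_bound: "\<forall>\<omega>. norm (V \<omega>) \<le> L" and "0 < a"
  shows "Lp_eventually_nhds M p X (\<lambda>Y. (\<integral>\<omega>. u \<omega> * (V \<omega> \<bullet> (Y \<omega> - X \<omega>)) \<partial>M) < a)"
proof -
  have "0 \<le> L"
    using V_bound norm_ge_zero order_trans by blast
  obtain \<epsilon> where "0 < \<epsilon>" and small:
    "\<And>h. memLp M p h \<Longrightarrow> Lpnorm M p h < \<epsilon> \<Longrightarrow> (\<integral>\<omega>. \<bar>u \<omega>\<bar> * \<bar>h \<omega>\<bar> \<partial>M) < a / (L + 1)"
    using integral_abs_mult_small[OF p u, of "a / (L + 1)"] \<open>0 < a\<close> \<open>0 \<le> L\<close> by auto
  have "(\<integral>\<omega>. u \<omega> * (V \<omega> \<bullet> (Y \<omega> - X \<omega>)) \<partial>M) < a"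
    if Y: "memLp M p Y" and close: "Lpnorm M p (\<lambda>\<omega>. Y \<omega> - X \<omega>) < \<epsilon>" for Y
  proof -
    have diff: "memLp M p (\<lambda>\<omega>. Y \<omega> - X \<omega>)"
      using memLp_diff[OF Y X] .
    have "(\<integral>\<omega>. u \<omega> * (V \<omega> \<bullet> (Y \<omega> - X \<omega>)) \<partial>M) \<le> L * (\<integral>\<omega>. \<bar>u \<omega>\<bar> * norm (Y \<omega> - X \<omega>) \<partial>M)"
      by (rule integral_mult_inner_le[OF p(1) u diff V V_bound])
    also have "\<dots> \<le> L * (a / (L + 1))"
      using small[OF memLp_norm[OF diff]] close \<open>0 \<le> L\<close>
      by (intro mult_left_mono) (auto simp: Lpnorm_def)
    also have "\<dots> < a"
      using \<open>0 \<le> L\<close> \<open>0 < a\<close> by (simp add: field_simps)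
    finally show ?thesis .
  qed
  then show ?thesis
    using \<open>0 < \<epsilon>\<close> p(2) unfolding Lp_eventually_nhds_def by auto
qed

lemma Lp_eventually_nhds_integral_inner_less:
  fixes u :: "'a \<Rightarrow> real" and X V :: "'a \<Rightarrow> 'b::euclidean_space"
  assumes p: "1 \<le> p" and u: "memLp M (conj_exp p) u" and X: "memLp M p X"
    and V: "V \<in> borel_measurable M" and V_bound: "\<forall>\<omega>. norm (V \<omega>) \<le> L" and "0 < a"
  shows "Lp_eventually_nhds M p X (\<lambda>Y. (\<integral>\<omega>. u \<omega> * (V \<omega> \<bullet> (Y \<omega> - X \<omega>)) \<partial>M) < a)"
proof (cases "p = \<infinity>")
  case True
  with u have "memLp M 1 u"
    by (simp add: conj_exp_def)
  with True V V_bound \<open>0 < a\<close> show ?thesis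
    using Lp_eventually_nhds_integral_inner_less_weak_star by blast
next
  case False
  with p u X V V_bound \<open>0 < a\<close> show ?thesis
    by (intro Lp_eventually_nhds_integral_inner_less_norm)
qed

lemma Lp_eventually_nhds_weighted_increment_less:
  fixes f :: "'b::euclidean_space \<Rightarrow> real" and X V :: "'a \<Rightarrow> 'b" and u r :: "'a \<Rightarrow> real"
  assumes p: "1 \<le> p" and f_Lp: "\<forall>Y. memLp M p Y \<longrightarrow> memLp M p (\<lambda>\<omega>. f (Y \<omega>))"
    and X: "memLp M p X" and u: "memLp M (conj_exp p) u" and u_nonneg: "\<forall>\<omega>. 0 \<le> u \<omega>"
    and V: "V \<in> borel_measurable M" and V_bound: "\<forall>\<omega>. norm (V \<omega>) \<le> L"
    and r: "integrable M (\<lambda>\<omega>. u \<omega> * r \<omega>)"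
    and majorant: "\<And>\<omega> y. f y \<le> f (X \<omega>) + V \<omega> \<bullet> (y - X \<omega>) + r \<omega>"
    and less: "(\<integral>\<omega>. u \<omega> * r \<omega> \<partial>M) < a"
  shows "Lp_eventually_nhds M p X (\<lambda>Y. (\<integral>\<omega>. u \<omega> * (f (Y \<omega>) - f (X \<omega>)) \<partial>M) < a)"
proof -
  have "0 < a - (\<integral>\<omega>. u \<omega> * r \<omega> \<partial>M)"
    using less by simp
  from Lp_eventually_nhds_integral_inner_less[OF p u X V V_bound this]
  show ?thesis
  proof (rule Lp_eventually_nhds_mono)
    fix Y
    assume Y: "memLp M p Y"
      and inner_less: "(\<integral>\<omega>. u \<omega> * (V \<omega> \<bullet> (Y \<omega> - X \<omega>)) \<partial>M) < a - (\<integral>\<omega>. u \<omega> * r \<omega> \<partial>M)"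
    have inner_int: "integrable M (\<lambda>\<omega>. u \<omega> * (V \<omega> \<bullet> (Y \<omega> - X \<omega>)))"
      by (rule integrable_mult_conj_exp[OF p u memLp_inner_bounded[OF memLp_diff[OF Y X] V V_bound]])
    have "(\<integral>\<omega>. u \<omega> * (f (Y \<omega>) - f (X \<omega>)) \<partial>M)
        \<le> (\<integral>\<omega>. u \<omega> * (V \<omega> \<bullet> (Y \<omega> - X \<omega>)) + u \<omega> * r \<omega> \<partial>M)"
    proof (rule integral_mono)
      show "integrable M (\<lambda>\<omega>. u \<omega> * (f (Y \<omega>) - f (X \<omega>)))"
        using f_Lp X Y by (intro integrable_mult_conj_exp[OF p u] memLp_diff) auto
      show "integrable M (\<lambda>\<omega>. u \<omega> * (V \<omega> \<bullet> (Y \<omega> - X \<omega>)) + u \<omega> * r \<omega>)"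
        using inner_int r by simp
      show "u \<omega> * (f (Y \<omega>) - f (X \<omega>)) \<le> u \<omega> * (V \<omega> \<bullet> (Y \<omega> - X \<omega>)) + u \<omega> * r \<omega>" for \<omega>
        using mult_left_mono[of _ _ "u \<omega>", OF _ u_nonneg[rule_format]] majorant[of "Y \<omega>" \<omega>]
        by (simp add: distrib_left[symmetric])
    qed
    also have "\<dots> < a"
      using inner_int r inner_less by simp
    finally show "(\<integral>\<omega>. u \<omega> * (f (Y \<omega>) - f (X \<omega>)) \<partial>M) < a" .
  qed
qed

lemma pairing_change_absorbed_by_cone:
  fixes Ys F G D :: "'a \<Rightarrow> real"
  assumes p: "1 \<le> p" and Ys: "memLp M (conj_exp p) Ys" and F: "memLp M p F" and G: "memLp M p G"
    and D: "D \<in> Lp_cone M p"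
  obtains D' where "D' \<in> Lp_cone M p"
    "pairing M Ys (\<lambda>\<omega>. F \<omega> + D \<omega>) - (\<integral>\<omega>. max 0 (- Ys \<omega>) * (G \<omega> - F \<omega>) \<partial>M)
      \<le> pairing M Ys (\<lambda>\<omega>. G \<omega> + D' \<omega>)"
proof -
  define u where "u = (\<lambda>\<omega>. max 0 (- Ys \<omega>))"
  have u: "memLp M (conj_exp p) u"
  proof (rule memLp_dominated[of _ Ys _ 1])
    show "u \<in> borel_measurable M"
      using memLp_borel_measurable[OF Ys] unfolding u_def by measurable
  qed (auto simp: Ys u_def)
  have D_Lp: "memLp M p D" and D_nonneg: "AE \<omega> in M. 0 \<le> D \<omega>"
    using D by (auto simp: Lp_cone_def)
  define D' where "D' = (\<lambda>\<omega>. D \<omega> + (if 0 \<le> Ys \<omega> then max 0 (F \<omega> - G \<omega>) else 0))"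
  have D'_Lp: "memLp M p D'"
  proof (rule memLp_dominated_sum[OF D_Lp memLp_diff[OF F G], of _ 1])
    show "D' \<in> borel_measurable M"
      using memLp_borel_measurable[OF D_Lp] memLp_borel_measurable[OF F]
        memLp_borel_measurable[OF G] memLp_borel_measurable[OF Ys]
      unfolding D'_def by measurable
  qed (auto simp: D'_def)
  have int_F: "integrable M (\<lambda>\<omega>. Ys \<omega> * (F \<omega> + D \<omega>))"
    by (rule integrable_mult_conj_exp[OF p Ys memLp_add[OF F D_Lp]])
  have int_u: "integrable M (\<lambda>\<omega>. u \<omega> * (G \<omega> - F \<omega>))"
    by (rule integrable_mult_conj_exp[OF p u memLp_diff[OF G F]])
  show thesis
  proof (rule that[of D'])
    show "D' \<in> Lp_cone M p"
      using D'_Lp D_nonneg by (auto simp: Lp_cone_def D'_def elim: eventually_mono)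
    have "pairing M Ys (\<lambda>\<omega>. F \<omega> + D \<omega>) - (\<integral>\<omega>. u \<omega> * (G \<omega> - F \<omega>) \<partial>M)
        = (\<integral>\<omega>. Ys \<omega> * (F \<omega> + D \<omega>) - u \<omega> * (G \<omega> - F \<omega>) \<partial>M)"
      using int_F int_u by (simp add: pairing_def)
    also have "\<dots> \<le> (\<integral>\<omega>. Ys \<omega> * (G \<omega> + D' \<omega>) \<partial>M)"
    proof (rule integral_mono)
      show "integrable M (\<lambda>\<omega>. Ys \<omega> * (F \<omega> + D \<omega>) - u \<omega> * (G \<omega> - F \<omega>))"
        using int_F int_u by simp
      show "integrable M (\<lambda>\<omega>. Ys \<omega> * (G \<omega> + D' \<omega>))"
        by (rule integrable_mult_conj_exp[OF p Ys memLp_add[OF G D'_Lp]])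
      show "Ys \<omega> * (F \<omega> + D \<omega>) - u \<omega> * (G \<omega> - F \<omega>) \<le> Ys \<omega> * (G \<omega> + D' \<omega>)" for \<omega>
      proof (cases "0 \<le> Ys \<omega>")
        case True
        then have "Ys \<omega> * (F \<omega> + D \<omega>) \<le> Ys \<omega> * (G \<omega> + D' \<omega>)"
          by (intro mult_left_mono) (auto simp: D'_def)
        with True show ?thesis
          by (simp add: u_def)
      qed (simp add: u_def D'_def algebra_simps)
    qed
    finally show "pairing M Ys (\<lambda>\<omega>. F \<omega> + D \<omega>) - (\<integral>\<omega>. max 0 (- Ys \<omega>) * (G \<omega> - F \<omega>) \<partial>M)
        \<le> pairing M Ys (\<lambda>\<omega>. G \<omega> + D' \<omega>)"
      by (simp add: pairing_def u_def)
  qed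
qed

lemma Lp_lower_demicontinuous_inducedI:
  fixes f :: "real^'n \<Rightarrow> real"
  assumes p: "1 \<le> p" and f_Lp: "\<forall>X. memLp M p X \<longrightarrow> memLp M p (\<lambda>\<omega>. f (X \<omega>))"
    and usc: "\<And>u X a. memLp M (conj_exp p) u \<Longrightarrow> \<forall>\<omega>. 0 \<le> u \<omega> \<Longrightarrow> memLp M p X \<Longrightarrow> 0 < a \<Longrightarrow>
      Lp_eventually_nhds M p X (\<lambda>Y. (\<integral>\<omega>. u \<omega> * (f (Y \<omega>) - f (X \<omega>)) \<partial>M) < a)"
  shows "Lp_lower_demicontinuous M p (induced f)"
  unfolding Lp_lower_demicontinuous_def
proof (intro allI impI Lp_openI)
  fix Ys :: "'a \<Rightarrow> real" and c :: real
  assume "memLp M (conj_exp p) Ys \<and> \<not> (AE \<omega> in M. Ys \<omega> = 0)"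
  then have Ys: "memLp M (conj_exp p) Ys"
    by simp
  let ?S = "{X. memLp M p X \<and> (\<exists>D\<in>Lp_cone M p. c < pairing M Ys (\<lambda>\<omega>. induced f X \<omega> + D \<omega>))}"
  show "?S \<subseteq> {X. memLp M p X}"
    by auto
  fix X
  assume "X \<in> ?S"
  then obtain D where X: "memLp M p X" and D: "D \<in> Lp_cone M p"
    and gt: "c < pairing M Ys (\<lambda>\<omega>. f (X \<omega>) + D \<omega>)"
    by (auto simp: induced_def)
  have u: "memLp M (conj_exp p) (\<lambda>\<omega>. max 0 (- Ys \<omega>))"
    using memLp_borel_measurable[OF Ys] by (intro memLp_dominated[OF Ys _ zero_le_one]) auto
  have "Lp_eventually_nhds M p X (\<lambda>Y. (\<integral>\<omega>. max 0 (- Ys \<omega>) * (f (Y \<omega>) - f (X \<omega>)) \<partial>M)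
      < pairing M Ys (\<lambda>\<omega>. f (X \<omega>) + D \<omega>) - c)"
    using gt by (intro usc[OF u _ X]) auto
  then show "Lp_eventually_nhds M p X (\<lambda>Y. Y \<in> ?S)"
  proof (rule Lp_eventually_nhds_mono)
    fix Y
    assume Y: "memLp M p Y" and less: "(\<integral>\<omega>. max 0 (- Ys \<omega>) * (f (Y \<omega>) - f (X \<omega>)) \<partial>M)
      < pairing M Ys (\<lambda>\<omega>. f (X \<omega>) + D \<omega>) - c"
    obtain D' where "D' \<in> Lp_cone M p" and "pairing M Ys (\<lambda>\<omega>. f (X \<omega>) + D \<omega>)
        - (\<integral>\<omega>. max 0 (- Ys \<omega>) * (f (Y \<omega>) - f (X \<omega>)) \<partial>M) \<le> pairing M Ys (\<lambda>\<omega>. f (Y \<omega>) + D' \<omega>)"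
      using pairing_change_absorbed_by_cone[OF p Ys _ _ D, of "\<lambda>\<omega>. f (X \<omega>)" "\<lambda>\<omega>. f (Y \<omega>)"] f_Lp X Y
      by blast
    with less Y show "Y \<in> ?S"
      by (auto simp: induced_def intro!: bexI[of _ D'])
  qed
qed

end

section \<open>Regular monotonicity\<close>

context prob_space
begin

lemma Lp_cone_sharp_AE_pos:
  fixes W :: "'a \<Rightarrow> real^'n"
  assumes W: "W \<in> Lp_cone_sharp M p"
  shows "AE \<omega> in M. \<forall>i. 0 < W \<omega> $ i"
proof -
  have W_meas: "W \<in> borel_measurable M"
    using W memLp_borel_measurable by (auto simp: Lp_cone_sharp_def Lp_cone_def)
  have "AE \<omega> in M. 0 < W \<omega> $ i" for i
  proof -
    define E where "E = {\<omega> \<in> space M. W \<omega> $ i \<le> 0}"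
    have E: "E \<in> sets M"
      unfolding E_def using W_meas by measurable
    define Z :: "'a \<Rightarrow> real^'n" where "Z = (\<lambda>\<omega>. indicator E \<omega> *\<^sub>R axis i 1)"
    have "memLp M (conj_exp p) Z"
      using E by (intro memLp_AE_bounded[of _ 1]) (auto simp: Z_def indicator_def)
    moreover have "AE \<omega> in M. 0 \<le> Z \<omega>"
      by (auto simp: Z_def less_eq_vec_def axis_def indicator_def)
    ultimately have Z: "Z \<in> Lp_cone M (conj_exp p)"
      by (simp add: Lp_cone_def)
    have "pairing M Z W = (\<integral>\<omega>. indicator E \<omega> * W \<omega> $ i \<partial>M)"
      by (simp add: pairing_def Z_def inner_axis')
    also have "\<dots> \<le> 0"
    proof -
      have "0 \<le> (\<integral>\<omega>. - (indicator E \<omega> * W \<omega> $ i) \<partial>M)"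
        by (intro integral_nonneg_AE AE_I2) (auto simp: E_def indicator_def)
      then show ?thesis
        by simp
    qed
    finally have "AE \<omega> in M. Z \<omega> = 0"
      using W Z unfolding Lp_cone_sharp_def by force
    with AE_space show ?thesis
      by eventually_elim (auto simp: Z_def E_def indicator_def split: if_splits)
  qed
  then have "AE \<omega> in M. \<forall>i\<in>UNIV. 0 < W \<omega> $ i"
    by (intro AE_finite_allI) auto
  then show ?thesis
    by simp
qed

lemma Lp_cone_sharp_if_AE_pos:
  fixes W :: "'a \<Rightarrow> real"
  assumes p: "1 \<le> p" and W: "memLp M p W" and pos: "AE \<omega> in M. 0 < W \<omega>"
  shows "W \<in> Lp_cone_sharp M p"
  unfolding Lp_cone_sharp_def
proof (intro CollectI conjI ballI impI)
  show "W \<in> Lp_cone M p"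
    using W pos by (auto simp: Lp_cone_def elim: eventually_mono)
  fix Z :: "'a \<Rightarrow> real"
  assume "Z \<in> Lp_cone M (conj_exp p)" and Z_nonzero: "\<not> (AE \<omega> in M. Z \<omega> = 0)"
  then have Z: "memLp M (conj_exp p) Z" "AE \<omega> in M. 0 \<le> Z \<omega>"
    by (auto simp: Lp_cone_def)
  have int: "integrable M (\<lambda>\<omega>. Z \<omega> * W \<omega>)"
    by (rule integrable_mult_conj_exp[OF p Z(1) W])
  have nonneg: "AE \<omega> in M. 0 \<le> Z \<omega> * W \<omega>"
    using Z(2) pos by eventually_elim simp
  have "(\<integral>\<omega>. Z \<omega> * W \<omega> \<partial>M) \<noteq> 0"
  proof
    assume "(\<integral>\<omega>. Z \<omega> * W \<omega> \<partial>M) = 0"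
    then have "AE \<omega> in M. Z \<omega> * W \<omega> = 0"
      using integral_nonneg_eq_0_iff_AE[OF int nonneg] by simp
    then have "AE \<omega> in M. Z \<omega> = 0"
      using pos by eventually_elim simp
    with Z_nonzero show False ..
  qed
  with integral_nonneg_AE[OF nonneg] show "0 < pairing M Z W"
    by (simp add: pairing_def)
qed

lemma Lp_regularly_increasing_induced:
  fixes f :: "real^'n \<Rightarrow> real"
  assumes f: "regularly_increasing_fun f" and p: "1 \<le> p"
    and f_Lp: "\<forall>X. memLp M p X \<longrightarrow> memLp M p (\<lambda>\<omega>. f (X \<omega>))"
  shows "Lp_regularly_increasing M p (induced f)"
  unfolding Lp_regularly_increasing_def
proof (intro allI impI conjI)
  fix X\<^sub>1 X\<^sub>2 :: "'a \<Rightarrow> real^'n"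
  assume "memLp M p X\<^sub>1 \<and> memLp M p X\<^sub>2"
  then have diff: "memLp M p (\<lambda>\<omega>. induced f X\<^sub>2 \<omega> - induced f X\<^sub>1 \<omega>)"
    using f_Lp memLp_diff[of p "\<lambda>\<omega>. f (X\<^sub>2 \<omega>)" "\<lambda>\<omega>. f (X\<^sub>1 \<omega>)"] by (simp add: induced_def)
  have mono: "f x \<le> f y" if "x \<le> y" for x y
    using f that by (simp add: regularly_increasing_fun_def)
  have strict: "f x < f y" if "\<forall>i. x $ i < y $ i" for x y
    using f that by (simp add: regularly_increasing_fun_def)
  show "(\<lambda>\<omega>. induced f X\<^sub>2 \<omega> - induced f X\<^sub>1 \<omega>) \<in> Lp_cone M p"
    if "(\<lambda>\<omega>. X\<^sub>2 \<omega> - X\<^sub>1 \<omega>) \<in> Lp_cone M p"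
  proof -
    have "AE \<omega> in M. 0 \<le> X\<^sub>2 \<omega> - X\<^sub>1 \<omega>"
      using that by (simp add: Lp_cone_def)
    then have "AE \<omega> in M. 0 \<le> induced f X\<^sub>2 \<omega> - induced f X\<^sub>1 \<omega>"
      by eventually_elim (simp add: induced_def mono)
    with diff show ?thesis
      by (simp add: Lp_cone_def)
  qed
  show "(\<lambda>\<omega>. induced f X\<^sub>2 \<omega> - induced f X\<^sub>1 \<omega>) \<in> Lp_cone_sharp M p"
    if "(\<lambda>\<omega>. X\<^sub>2 \<omega> - X\<^sub>1 \<omega>) \<in> Lp_cone_sharp M p"
  proof (rule Lp_cone_sharp_if_AE_pos[OF p diff])
    show "AE \<omega> in M. 0 < induced f X\<^sub>2 \<omega> - induced f X\<^sub>1 \<omega>"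
      using Lp_cone_sharp_AE_pos[OF that] by eventually_elim (simp add: induced_def strict)
  qed
qed

end

section \<open>Concave and linear aggregation functions\<close>

lemma Lp_concave_induced:
  fixes M :: "'a measure" and f :: "real^'n \<Rightarrow> real"
  assumes "concave_on UNIV f"
  shows "Lp_concave M p (induced f)"
  unfolding Lp_concave_def induced_def
proof (intro allI impI AE_I2)
  fix X\<^sub>1 X\<^sub>2 :: "'a \<Rightarrow> real^'n" and t :: real and \<omega>
  assume "memLp M p X\<^sub>1 \<and> memLp M p X\<^sub>2 \<and> 0 < t \<and> t < 1"
  then show "t * f (X\<^sub>1 \<omega>) + (1 - t) * f (X\<^sub>2 \<omega>) \<le> f (t *\<^sub>R X\<^sub>1 \<omega> + (1 - t) *\<^sub>R X\<^sub>2 \<omega>)"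
    using assms by (auto simp: concave_on_iff)
qed

lemma Lp_linear_induced:
  assumes "linear f"
  shows "Lp_linear M p (induced f)"
  unfolding Lp_linear_def induced_def
  by (intro allI impI AE_I2) (simp add: linear_add[OF assms] linear_scale[OF assms])

context prob_space
begin

lemma integral_tail_small:
  fixes X :: "'a \<Rightarrow> 'b::euclidean_space" and g :: "'a \<Rightarrow> real"
  assumes X: "X \<in> borel_measurable M" and g: "integrable M g" "\<And>\<omega>. 0 \<le> g \<omega>" and "0 < \<eta>"
  obtains R where "(\<integral>\<omega>. (if norm (X \<omega>) \<le> R then 0 else g \<omega>) \<partial>M) < \<eta>"
proof -
  define tail where "tail = (\<lambda>n \<omega>. if norm (X \<omega>) \<le> real n then 0 else g \<omega>)"
  have "(\<lambda>n. integral\<^sup>L M (tail n)) \<longlonglongrightarrow> integral\<^sup>L M (\<lambda>\<omega>. 0)"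
  proof (rule integral_dominated_convergence[where w = g])
    show "tail n \<in> borel_measurable M" for n
      unfolding tail_def using X g(1) by measurable
    show "AE \<omega> in M. (\<lambda>n. tail n \<omega>) \<longlonglongrightarrow> 0"
    proof (intro AE_I2 tendsto_eventually)
      fix \<omega>
      obtain N :: nat where "norm (X \<omega>) \<le> real N"
        using real_arch_simple by blast
      then have "tail n \<omega> = 0" if "N \<le> n" for n
        using that by (simp add: tail_def)
      then show "\<forall>\<^sub>F n in sequentially. tail n \<omega> = 0"
        by (auto simp: eventually_sequentially)
    qed
    show "AE \<omega> in M. norm (tail n \<omega>) \<le> g \<omega>" for n
      using g(2) by (simp add: tail_def)
  qed (use g in auto)
  then have "\<forall>\<^sub>F n in sequentially. integral\<^sup>L M (tail n) < \<eta>"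
    using \<open>0 < \<eta>\<close> by (intro order_tendstoD(2)) auto
  then obtain N where "integral\<^sup>L M (tail N) < \<eta>"
    by (auto simp: eventually_sequentially)
  then show thesis
    by (intro that[of "real N"]) (simp add: tail_def)
qed

lemma concave_on_random_affine_majorant:
  fixes f :: "'b::euclidean_space \<Rightarrow> real" and X :: "'a \<Rightarrow> 'b" and u :: "'a \<Rightarrow> real"
  assumes conc: "concave_on UNIV f" and B: "\<And>x. f x \<le> B" and X: "X \<in> borel_measurable M"
    and u: "integrable M u" "\<And>\<omega>. 0 \<le> u \<omega>" and gap: "integrable M (\<lambda>\<omega>. u \<omega> * (B - f (X \<omega>)))"
    and "0 < \<eta>"
  obtains V L r where "V \<in> borel_measurable M" "\<forall>\<omega>. norm (V \<omega>) \<le> L"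
    "integrable M (\<lambda>\<omega>. u \<omega> * r \<omega>)" "\<And>\<omega> y. f y \<le> f (X \<omega>) + V \<omega> \<bullet> (y - X \<omega>) + r \<omega>"
    "(\<integral>\<omega>. u \<omega> * r \<omega> \<partial>M) < \<eta>"
proof -
  define T where "T R \<omega> = (if norm (X \<omega>) \<le> R then 0 else u \<omega> * (B - f (X \<omega>)))" for R \<omega>
  have "0 \<le> u \<omega> * (B - f (X \<omega>))" for \<omega>
    using u(2) B by simp
  moreover have "0 < \<eta> / 2"
    using \<open>0 < \<eta>\<close> by simp
  ultimately obtain R where tail: "(\<integral>\<omega>. T R \<omega> \<partial>M) < \<eta> / 2"
    unfolding T_def by (rule integral_tail_small[OF X gap])
  define U where "U = (\<integral>\<omega>. u \<omega> \<partial>M)"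
  have "0 \<le> U"
    unfolding U_def using u(2) by simp
  define e where "e = \<eta> / (2 * (U + 1))"
  have "0 < e" and "e * U < \<eta> / 2"
    using \<open>0 < \<eta>\<close> \<open>0 \<le> U\<close> by (simp_all add: e_def field_simps)
  obtain W L where W: "W \<in> borel_measurable borel" and W_bound: "\<And>x. norm x \<le> R \<Longrightarrow> norm (W x) \<le> L"
    and W_approx: "\<And>x y. norm x \<le> R \<Longrightarrow> f y \<le> f x + W x \<bullet> (y - x) + e"
    using concave_on_measurable_approx_supergradient[OF conc \<open>0 < e\<close>, where R = R] by blast
  have "integrable M (T R)"
  proof (rule Bochner_Integration.integrable_bound[OF gap])
    have "f \<in> borel_measurable borel"
      by (rule borel_measurable_continuous_onI[OF concave_on_continuous[OF conc]])
    then show "T R \<in> borel_measurable M"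
      unfolding T_def using X borel_measurable_integrable[OF u(1)] by measurable
  qed (simp add: T_def)
  define V where "V \<omega> = (if norm (X \<omega>) \<le> R then W (X \<omega>) else 0)" for \<omega>
  define r where "r \<omega> = e + (if norm (X \<omega>) \<le> R then 0 else B - f (X \<omega>))" for \<omega>
  have ur: "u \<omega> * r \<omega> = e * u \<omega> + T R \<omega>" for \<omega>
    by (simp add: r_def T_def algebra_simps)
  show thesis
  proof (rule that)
    show "V \<in> borel_measurable M"
      unfolding V_def using X measurable_compose[OF X W] by measurable
    show "\<forall>\<omega>. norm (V \<omega>) \<le> max L 0"
      by (simp add: V_def W_bound le_max_iff_disj)
    show "f y \<le> f (X \<omega>) + V \<omega> \<bullet> (y - X \<omega>) + r \<omega>" for \<omega> y
      using W_approx[of "X \<omega>" y] B[of y] \<open>0 < e\<close> by (simp add: V_def r_def)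
    show "integrable M (\<lambda>\<omega>. u \<omega> * r \<omega>)"
      using u(1) \<open>integrable M (T R)\<close> by (simp add: ur)
    have "(\<integral>\<omega>. u \<omega> * r \<omega> \<partial>M) = e * U + (\<integral>\<omega>. T R \<omega> \<partial>M)"
      using u(1) \<open>integrable M (T R)\<close> by (simp add: ur U_def)
    with \<open>e * U < \<eta> / 2\<close> tail show "(\<integral>\<omega>. u \<omega> * r \<omega> \<partial>M) < \<eta>"
      by linarith
  qed
qed

lemma Lp_lower_demicontinuous_induced_concave:
  fixes f :: "real^'n \<Rightarrow> real"
  assumes p: "1 \<le> p" and f_Lp: "\<forall>X. memLp M p X \<longrightarrow> memLp M p (\<lambda>\<omega>. f (X \<omega>))"
    and conc: "concave_on UNIV f" and B: "\<And>x. f x \<le> B"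
  shows "Lp_lower_demicontinuous M p (induced f)"
proof (rule Lp_lower_demicontinuous_inducedI[OF p f_Lp])
  fix u :: "'a \<Rightarrow> real" and X :: "'a \<Rightarrow> real^'n" and a :: real
  assume u: "memLp M (conj_exp p) u" and u_nonneg: "\<forall>\<omega>. 0 \<le> u \<omega>" and X: "memLp M p X" and "0 < a"
  have "memLp M p (\<lambda>_. B)"
    by (rule memLp_AE_bounded[of _ "\<bar>B\<bar>"]) auto
  then have "memLp M p (\<lambda>\<omega>. B - f (X \<omega>))"
    using memLp_diff f_Lp X by blast
  then have gap: "integrable M (\<lambda>\<omega>. u \<omega> * (B - f (X \<omega>)))"
    by (rule integrable_mult_conj_exp[OF p u])
  obtain V L r where "V \<in> borel_measurable M" "\<forall>\<omega>. norm (V \<omega>) \<le> L"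
    "integrable M (\<lambda>\<omega>. u \<omega> * r \<omega>)" "\<And>\<omega> y. f y \<le> f (X \<omega>) + V \<omega> \<bullet> (y - X \<omega>) + r \<omega>"
    "(\<integral>\<omega>. u \<omega> * r \<omega> \<partial>M) < a"
    using concave_on_random_affine_majorant[OF conc B memLp_borel_measurable[OF X]
          memLp_integrable[OF one_le_conj_exp[OF p] u] u_nonneg[rule_format] gap \<open>0 < a\<close>]
    by blast
  then show "Lp_eventually_nhds M p X (\<lambda>Y. (\<integral>\<omega>. u \<omega> * (f (Y \<omega>) - f (X \<omega>)) \<partial>M) < a)"
    by (intro Lp_eventually_nhds_weighted_increment_less[OF p f_Lp X u u_nonneg])
qed

lemma Lp_lower_demicontinuous_induced_linear:
  fixes f :: "real^'n \<Rightarrow> real"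
  assumes p: "1 \<le> p" and f_Lp: "\<forall>X. memLp M p X \<longrightarrow> memLp M p (\<lambda>\<omega>. f (X \<omega>))"
    and "linear f"
  shows "Lp_lower_demicontinuous M p (induced f)"
proof (rule Lp_lower_demicontinuous_inducedI[OF p f_Lp])
  obtain w where w: "\<And>x. f x = w \<bullet> x"
    using linear_eq_inner[OF \<open>linear f\<close>] by blast
  fix u :: "'a \<Rightarrow> real" and X :: "'a \<Rightarrow> real^'n" and a :: real
  assume u: "memLp M (conj_exp p) u" and u_nonneg: "\<forall>\<omega>. 0 \<le> u \<omega>" and X: "memLp M p X" and "0 < a"
  show "Lp_eventually_nhds M p X (\<lambda>Y. (\<integral>\<omega>. u \<omega> * (f (Y \<omega>) - f (X \<omega>)) \<partial>M) < a)"
    by (rule Lp_eventually_nhds_weighted_increment_less[OF p f_Lp X u u_nonneg, where V = "\<lambda>_. w"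
          and L = "norm w" and r = "\<lambda>_. 0"])
      (use \<open>0 < a\<close> in \<open>simp_all add: w inner_diff_right\<close>)
qed

end

theorem lemma6p2:
  fixes M :: "'a measure" and p :: ennreal and f :: "real^'n \<Rightarrow> real"
  assumes "prob_space M"
    and "1 \<le> p"
    and "aggregation_function M p f"
  shows "(concave_on UNIV f \<and> (\<exists>B. \<forall>x. f x \<le> B) \<longrightarrow>
            Lp_concave M p (induced f) \<and> Lp_lower_demicontinuous M p (induced f))
       \<and> (linear f \<longrightarrow>
            Lp_linear M p (induced f) \<and> Lp_lower_demicontinuous M p (induced f))
       \<and> (regularly_increasing_fun f \<longrightarrow> Lp_regularly_increasing M p (induced f))"
proof -
  interpret prob_space M
    by fact
  have f_Lp: "\<forall>X. memLp M p X \<longrightarrow> memLp M p (\<lambda>\<omega>. f (X \<omega>))"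
    using assms(3) by (simp add: aggregation_function_def)
  show ?thesis
    using Lp_concave_induced Lp_lower_demicontinuous_induced_concave[OF assms(2) f_Lp]
      Lp_linear_induced Lp_lower_demicontinuous_induced_linear[OF assms(2) f_Lp]
      Lp_regularly_increasing_induced[OF _ assms(2) f_Lp]
    by blast
qed

end
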